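(* Let $m$ be a non-negative integer and let $S=(u_0,\dots,u_{n-1})$ be an antisymmetric finite sequence of elements of $\mathbb{Z}/m\mathbb{Z}$. Then the Steinhaus triangle $\Delta S$ is balanced if and only if the triangle $\nabla S$ is balanced.
   Context: $S$ is antisymmetric if $u_{n-1-j}=-u_j$ for all $j\in\{0,\dots,n-1\}$. The Steinhaus triangle $\Delta S$ is $(a_{i,j})_{i,j\ge0,\,i+j<n}$ with $a_{0,j}=u_j$ and $a_{i,j}=a_{i-1,j}+a_{i-1,j+1}$ for $i\ge1$; the triangle $\nabla S$ is $(b_{i,j})_{i,j\ge0,\,i+j<n}$ with $b_{0,j}=u_j$ and $b_{i,j}=-b_{i-1,j}-b_{i-1,j+1}$ for $i\ge1$. A triangle is balanced if every element of $\mathbb{Z}/m\mathbb{Z}$ occurs the same number of times among its entries. *)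

theory Defs
  imports Main
begin

text \<open>Elements of Z/mZ are represented by their canonical integer representatives,
  i.e. the integers x with x mod m = x ({0..m-1} for m > 0, all of Z for m = 0).\<close>

definition residues :: "nat \<Rightarrow> int set" where
  "residues m = {x. x mod int m = x}"

fun steinhaus :: "nat \<Rightarrow> (nat \<Rightarrow> int) \<Rightarrow> nat \<Rightarrow> nat \<Rightarrow> int" where
  "steinhaus m u 0 j = u j mod int m"
| "steinhaus m u (Suc i) j = (steinhaus m u i j + steinhaus m u i (Suc j)) mod int m"

fun nabla :: "nat \<Rightarrow> (nat \<Rightarrow> int) \<Rightarrow> nat \<Rightarrow> nat \<Rightarrow> int" where
  "nabla m u 0 j = u j mod int m"
| "nabla m u (Suc i) j = (- nabla m u i j - nabla m u i (Suc j)) mod int m"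

definition occ :: "nat \<Rightarrow> (nat \<Rightarrow> nat \<Rightarrow> int) \<Rightarrow> int \<Rightarrow> nat" where
  "occ n T x = card {(i, j). i + j < n \<and> T i j = x}"

definition balanced :: "nat \<Rightarrow> nat \<Rightarrow> (nat \<Rightarrow> nat \<Rightarrow> int) \<Rightarrow> bool" where
  "balanced m n T \<longleftrightarrow> (\<forall>x\<in>residues m. \<forall>y\<in>residues m. occ n T x = occ n T y)"

definition antisymmetric :: "nat \<Rightarrow> nat \<Rightarrow> (nat \<Rightarrow> int) \<Rightarrow> bool" where
  "antisymmetric m n u \<longleftrightarrow> (\<forall>j<n. u (n - 1 - j) = (- u j) mod int m)"

end

theory Submission
  imports Defs
begin

text \<open>Row i of the triangle nabla S is (-1)^i times row i of the Steinhaus triangle of S.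
  Antisymmetry of S is inherited by every row of the Steinhaus triangle, so negating an
  odd row amounts to reversing it. Hence nabla S arises from the Steinhaus triangle by
  reversing its odd rows, and both triangles contain every value equally often.\<close>

lemma steinhaus_mod: "steinhaus m u i j mod int m = steinhaus m u i j"
  by (cases i) simp_all

lemma steinhaus_row_antisymmetric:
  assumes "antisymmetric m n u" and "i + j < n"
  shows "steinhaus m u i (n - 1 - i - j) = (- steinhaus m u i j) mod int m"
  using assms(2)
proof (induction i arbitrary: j)
  case 0
  then show ?case
    using assms(1) by (simp add: antisymmetric_def mod_simps)
next
  case (Suc i)
  have "n - 1 - Suc i - j = n - 1 - i - Suc j" and "Suc (n - 1 - Suc i - j) = n - 1 - i - j"
    using Suc.prems by auto
  then have "steinhaus m u (Suc i) (n - 1 - Suc i - j)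
      = (steinhaus m u i (n - 1 - i - Suc j) + steinhaus m u i (n - 1 - i - j)) mod int m"
    by simp
  also have "\<dots> = ((- steinhaus m u i (Suc j)) mod int m + (- steinhaus m u i j) mod int m) mod int m"
    using Suc.IH[of "Suc j"] Suc.IH[of j] Suc.prems by simp
  also have "\<dots> = (- steinhaus m u (Suc i) j) mod int m"
    by (simp add: mod_simps algebra_simps)
  finally show ?case .
qed

lemma minus_mod_diff_mod_eq: "(- (a mod c) - b mod c) mod c = (- a - b) mod (c :: int)"
proof -
  have "(- (a mod c) - b mod c) mod c = ((- (a mod c)) mod c - b) mod c"
    by (simp only: mod_diff_right_eq mod_diff_left_eq)
  also have "\<dots> = (- a - b) mod c"
    by (simp only: mod_minus_eq mod_diff_left_eq)
  finally show ?thesis .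
qed

lemma nabla_eq_alternating_steinhaus: "nabla m u i j = ((-1) ^ i * steinhaus m u i j) mod int m"
proof (induction i arbitrary: j)
  case 0
  then show ?case by simp
next
  case (Suc i)
  have "nabla m u (Suc i) j
      = (- (((-1) ^ i * steinhaus m u i j) mod int m)
         - ((-1) ^ i * steinhaus m u i (Suc j)) mod int m) mod int m"
    by (simp only: nabla.simps Suc.IH)
  also have "\<dots> = (- ((-1) ^ i * steinhaus m u i j) - (-1) ^ i * steinhaus m u i (Suc j)) mod int m"
    by (rule minus_mod_diff_mod_eq)
  also have "\<dots> = ((-1) ^ Suc i * (steinhaus m u i j + steinhaus m u i (Suc j))) mod int m"
    by (simp add: distrib_left)
  also have "\<dots> = ((-1) ^ Suc i * ((steinhaus m u i j + steinhaus m u i (Suc j)) mod int m)) mod int m"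
    by (rule mod_mult_right_eq[symmetric])
  finally show ?case
    by (simp only: steinhaus.simps)
qed

definition reverse_odd_rows :: "nat \<Rightarrow> nat \<times> nat \<Rightarrow> nat \<times> nat" where
  "reverse_odd_rows n = (\<lambda>(i, j). if even i then (i, j) else (i, n - 1 - i - j))"

lemma reverse_odd_rows_involution:
  "i + j < n \<Longrightarrow> reverse_odd_rows n (reverse_odd_rows n (i, j)) = (i, j)"
  by (auto simp: reverse_odd_rows_def)

lemma reverse_odd_rows_within_row:
  "i + j < n \<Longrightarrow> \<exists>j'. reverse_odd_rows n (i, j) = (i, j') \<and> i + j' < n"
  by (auto simp: reverse_odd_rows_def)

lemma nabla_eq_steinhaus_reverse_odd_rows:
  assumes "antisymmetric m n u" and "i + j < n" and "reverse_odd_rows n (i, j) = (i, j')"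
  shows "nabla m u i j = steinhaus m u i j'"
proof (cases "even i")
  case True
  then show ?thesis
    using assms(3) by (simp add: reverse_odd_rows_def nabla_eq_alternating_steinhaus steinhaus_mod)
next
  case False
  then show ?thesis
    using assms(3) steinhaus_row_antisymmetric[OF assms(1,2)]
    by (simp add: reverse_odd_rows_def nabla_eq_alternating_steinhaus)
qed

lemma occ_nabla_eq_occ_steinhaus:
  assumes "antisymmetric m n u"
  shows "occ n (nabla m u) x = occ n (steinhaus m u) x"
proof -
  let ?f = "reverse_odd_rows n"
  let ?N = "{(i, j). i + j < n \<and> nabla m u i j = x}"
  let ?S = "{(i, j). i + j < n \<and> steinhaus m u i j = x}"
  have maps_to: "?f p \<in> ?S" if "p \<in> ?N" for p
  proof -
    obtain i j where p: "p = (i, j)" "i + j < n" "nabla m u i j = x"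
      using \<open>p \<in> ?N\<close> by auto
    obtain j' where f: "?f (i, j) = (i, j')" "i + j' < n"
      using reverse_odd_rows_within_row[OF p(2)] by blast
    show ?thesis
      using p f nabla_eq_steinhaus_reverse_odd_rows[OF assms p(2) f(1)] by simp
  qed
  have maps_from: "?f p \<in> ?N" if "p \<in> ?S" for p
  proof -
    obtain i j where p: "p = (i, j)" "i + j < n" "steinhaus m u i j = x"
      using \<open>p \<in> ?S\<close> by auto
    obtain j' where f: "?f (i, j) = (i, j')" "i + j' < n"
      using reverse_odd_rows_within_row[OF p(2)] by blast
    have "?f (i, j') = (i, j)"
      using reverse_odd_rows_involution[OF p(2)] f(1) by simp
    then show ?thesis
      using p f nabla_eq_steinhaus_reverse_odd_rows[OF assms f(2)] by simp
  qed
  have "bij_betw ?f ?N ?S"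
  proof (rule bij_betw_byWitness[where f' = ?f])
    show "\<forall>p\<in>?N. ?f (?f p) = p" "\<forall>p\<in>?S. ?f (?f p) = p"
      using reverse_odd_rows_involution by auto
    show "?f ` ?N \<subseteq> ?S"
      by (rule image_subsetI) (rule maps_to)
    show "?f ` ?S \<subseteq> ?N"
      by (rule image_subsetI) (rule maps_from)
  qed
  then show ?thesis
    unfolding occ_def by (rule bij_betw_same_card)
qed

theorem corollary1:
  fixes m n :: nat and u :: "nat \<Rightarrow> int"
  assumes "\<forall>j<n. u j \<in> residues m"
    and "antisymmetric m n u"
  shows "balanced m n (steinhaus m u) \<longleftrightarrow> balanced m n (nabla m u)"
  unfolding balanced_def using occ_nabla_eq_occ_steinhaus[OF assms(2)] by simp

end
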